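(* The adelic absolute value $a\mapsto\|a\|:=|a_\infty|\prod_{p\in\mathcal{P}}p^{-v_p(a)}$ is an upper semi-continuous function on the ring $\mathcal{A}$ of adeles of $\mathbb{Q}$.
   Context: $\mathcal{P}$ is the set of primes. $\mathcal{A}=\mathcal{A}_f\times\mathbb{R}$ with $\mathcal{A}_f=\{(a_p)\in\prod_p\mathbb{Q}_p: a_p\in\mathbb{Z}_p\text{ for almost all }p\}$ in the restricted product topology, and $\mathcal{A}$ has the product topology; $a=((a_p)_p,a_\infty)$. $v_p(a):=v_p(a_p)\in\mathbb{Z}\cup\{\infty\}$ is the $p$-adic valuation, with $p^{-\infty}=0$; the infinite product is interpreted as the limit over finite subsets of primes (it is $0$ if some $a_p=0$ or $v_p(a)>0$ for infinitely many $p$). *)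

theory Defs
  imports "HOL-Analysis.Analysis" "HOL-Computational_Algebra.Primes"
begin

text \<open>p-adic numbers, modelled by their (unique) canonical p-adic digit expansions
  x = sum over n of d n * p^n, with digits d n in {0..<p} and d n = 0 for n sufficiently
  negative.  Only the topology and the valuation of Q_p enter the statement.\<close>

definition Qp :: "nat \<Rightarrow> (int \<Rightarrow> nat) set" where
  "Qp p = {d. (\<forall>n. d n < p) \<and> (\<exists>N. \<forall>n<N. d n = 0)}"

definition Zp :: "nat \<Rightarrow> (int \<Rightarrow> nat) set" where
  "Zp p = {d \<in> Qp p. \<forall>n<0. d n = 0}"

text \<open>p-adic topology: x + p^n Z_p is the set of expansions agreeing with x below n.\<close>
definition qp_open :: "nat \<Rightarrow> (int \<Rightarrow> nat) set \<Rightarrow> bool" where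
  "qp_open p U \<longleftrightarrow> U \<subseteq> Qp p \<and>
     (\<forall>x\<in>U. \<exists>n::int. {y \<in> Qp p. \<forall>k<n. y k = x k} \<subseteq> U)"

text \<open>The factor p^(-v_p(x)), with p^(-\<infinity>) = 0 (x = 0 iff all digits vanish);
  v_p(x) is the position of the first nonzero digit.\<close>
definition padic_factor :: "nat \<Rightarrow> (int \<Rightarrow> nat) \<Rightarrow> real" where
  "padic_factor p x = (if \<forall>n. x n = 0 then 0
      else real p powr (- real_of_int (LEAST n. x n \<noteq> 0)))"

text \<open>Adeles of Q: a finite adele is a family (a_p) indexed by primes (normalised to 0 at
  non-primes), with a_p in Z_p for almost all p; then A = A_f x R.\<close>
definition finite_adeles :: "(nat \<Rightarrow> (int \<Rightarrow> nat)) set" where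
  "finite_adeles = {a. (\<forall>p. prime p \<longrightarrow> a p \<in> Qp p) \<and> (\<forall>p. \<not> prime p \<longrightarrow> a p = (\<lambda>_. 0))
      \<and> finite {p. prime p \<and> a p \<notin> Zp p}}"

definition adeles :: "((nat \<Rightarrow> (int \<Rightarrow> nat)) \<times> real) set" where
  "adeles = finite_adeles \<times> UNIV"

text \<open>Basic open sets of the restricted product topology times R:
  (prod_p W_p) x V with W_p open in Q_p, W_p = Z_p for almost all p, V open in R.\<close>
definition adele_basic_open ::
  "(nat \<Rightarrow> (int \<Rightarrow> nat) set) \<Rightarrow> real set \<Rightarrow> ((nat \<Rightarrow> (int \<Rightarrow> nat)) \<times> real) set" where
  "adele_basic_open W V = {(b, r). b \<in> finite_adeles \<and> r \<in> V \<and> (\<forall>p. prime p \<longrightarrow> b p \<in> W p)}"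

definition adele_open :: "((nat \<Rightarrow> (int \<Rightarrow> nat)) \<times> real) set \<Rightarrow> bool" where
  "adele_open U \<longleftrightarrow> U \<subseteq> adeles \<and>
     (\<forall>x\<in>U. \<exists>W V. open V \<and> (\<forall>p. prime p \<longrightarrow> qp_open p (W p))
        \<and> finite {p. prime p \<and> W p \<noteq> Zp p}
        \<and> x \<in> adele_basic_open W V \<and> adele_basic_open W V \<subseteq> U)"

definition adele_abs :: "((nat \<Rightarrow> (int \<Rightarrow> nat)) \<times> real) \<Rightarrow> real" where
  "adele_abs a = \<bar>snd a\<bar> *
     Lim (finite_subsets_at_top {p. prime p}) (\<lambda>S. \<Prod>p\<in>S. padic_factor p (fst a p))"

end

theory Submission
  imports Defs
begin

text \<open>Away from the finitely many primes at which a_p is not integral every factor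
  p^(-v_p(a)) is at most 1, so the partial products over finite sets of primes decrease once
  they contain those primes and converge to their infimum.  Hence \<parallel>a\<parallel> < c is already
  witnessed by a partial product |a_\<infinity>| \<Prod>_{p\<in>S} p^(-v_p(a)) < c over a finite S, while
  \<parallel>b\<parallel> is bounded by the partial product of b over S whenever b is integral outside S.  Since
  p^(-v_p) is locally constant away from 0 and tends to 0 at 0, this partial product is upper
  semi-continuous in the finitely many coordinates it involves.\<close>

lemma int_Least_bdd_below:
  fixes Q :: "int \<Rightarrow> bool"
  assumes below: "\<forall>n<N. \<not> Q n" and "Q m"
  shows int_LeastI_bdd_below: "Q (LEAST n. Q n)"
    and int_Least_le_bdd_below: "\<And>k. Q k \<Longrightarrow> (LEAST n. Q n) \<le> k"
proof -
  define j where "j = (LEAST j::nat. Q (N + int j))"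
  have "m \<ge> N" using assms by (meson not_le)
  then have "Q (N + int (nat (m - N)))" using \<open>Q m\<close> by simp
  then have Qj: "Q (N + int j)" unfolding j_def by (rule LeastI)
  have j_le: "N + int j \<le> k" if "Q k" for k
  proof -
    have "k \<ge> N" using below that by (meson not_le)
    then have "Q (N + int (nat (k - N)))" using that by simp
    then have "j \<le> nat (k - N)" unfolding j_def by (rule Least_le)
    then show ?thesis using \<open>k \<ge> N\<close> by linarith
  qed
  have "(LEAST n. Q n) = N + int j" by (rule Least_equality) (use Qj j_le in auto)
  then show "Q (LEAST n. Q n)" and "\<And>k. Q k \<Longrightarrow> (LEAST n. Q n) \<le> k"
    using Qj j_le by auto
qed

lemma prod_le_prod_subset:
  fixes g :: "'a \<Rightarrow> 'b::linordered_semidom"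
  assumes "finite T" "T0 \<subseteq> T" "\<And>p. p \<in> T \<Longrightarrow> 0 \<le> g p" "\<And>p. p \<in> T - T0 \<Longrightarrow> g p \<le> 1"
  shows "prod g T \<le> prod g T0"
proof -
  have "prod g T = prod g (T - T0) * prod g T0"
    using prod.subset_diff[OF assms(2,1)] by simp
  also have "\<dots> \<le> 1 * prod g T0"
    using assms by (intro mult_right_mono prod_le_1 prod_nonneg) auto
  finally show ?thesis by simp
qed

lemma tendsto_prod_finite_subsets_Inf:
  fixes g :: "'a \<Rightarrow> real"
  assumes "finite F" "F \<subseteq> A" "\<And>p. p \<in> A \<Longrightarrow> 0 \<le> g p" "\<And>p. p \<in> A - F \<Longrightarrow> g p \<le> 1"
  shows "((\<lambda>S. \<Prod>p\<in>S. g p) \<longlongrightarrow> Inf {prod g T | T. finite T \<and> F \<subseteq> T \<and> T \<subseteq> A})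
           (finite_subsets_at_top A)"
    (is "(_ \<longlongrightarrow> Inf ?X) _")
proof (rule order_tendstoI)
  have "bdd_below ?X"
    using assms(3) by (auto simp: bdd_below_def intro!: exI[of _ 0] prod_nonneg)
  fix a
  assume "a < Inf ?X"
  show "\<forall>\<^sub>F S in finite_subsets_at_top A. a < (\<Prod>p\<in>S. g p)"
    unfolding eventually_finite_subsets_at_top using assms(1,2) \<open>a < Inf ?X\<close>
    by (intro exI[of _ F]) (auto intro: less_le_trans cInf_lower[OF _ \<open>bdd_below ?X\<close>])
next
  have "?X \<noteq> {}" using assms(1,2) by blast
  fix a
  assume "Inf ?X < a"
  then obtain T0 where T0: "finite T0" "F \<subseteq> T0" "T0 \<subseteq> A" "prod g T0 < a"
    using cInf_lessD[OF \<open>?X \<noteq> {}\<close>] by blast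
  have "prod g T \<le> prod g T0" if "finite T" "T0 \<subseteq> T" "T \<subseteq> A" for T
    using that T0 by (intro prod_le_prod_subset) (auto intro: assms(3,4))
  then show "\<forall>\<^sub>F S in finite_subsets_at_top A. (\<Prod>p\<in>S. g p) < a"
    unfolding eventually_finite_subsets_at_top using T0
    by (intro exI[of _ T0]) (auto intro: le_less_trans)
qed

lemma tendsto_Lim_prod_finite_subsets:
  fixes g :: "'a \<Rightarrow> real"
  assumes "finite F" "F \<subseteq> A" "\<And>p. p \<in> A \<Longrightarrow> 0 \<le> g p" "\<And>p. p \<in> A - F \<Longrightarrow> g p \<le> 1"
  shows "((\<lambda>S. \<Prod>p\<in>S. g p) \<longlongrightarrow> Lim (finite_subsets_at_top A) (\<lambda>S. \<Prod>p\<in>S. g p))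
           (finite_subsets_at_top A)"
proof -
  have "((\<lambda>S. \<Prod>p\<in>S. g p) \<longlongrightarrow> Inf {prod g T | T. finite T \<and> F \<subseteq> T \<and> T \<subseteq> A})
          (finite_subsets_at_top A)"
    using assms by (rule tendsto_prod_finite_subsets_Inf)
  then show ?thesis
    by (simp add: tendsto_Lim)
qed

lemma Lim_prod_finite_subsets_le:
  fixes g :: "'a \<Rightarrow> real"
  assumes "finite T" "T \<subseteq> A" "\<And>p. p \<in> A \<Longrightarrow> 0 \<le> g p" "\<And>p. p \<in> A - T \<Longrightarrow> g p \<le> 1"
  shows "Lim (finite_subsets_at_top A) (\<lambda>S. \<Prod>p\<in>S. g p) \<le> prod g T"
proof (rule tendsto_upperbound)
  show "((\<lambda>S. \<Prod>p\<in>S. g p) \<longlongrightarrow> Lim (finite_subsets_at_top A) (\<lambda>S. \<Prod>p\<in>S. g p))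
          (finite_subsets_at_top A)"
    using assms by (rule tendsto_Lim_prod_finite_subsets)
  show "\<forall>\<^sub>F S in finite_subsets_at_top A. (\<Prod>p\<in>S. g p) \<le> prod g T"
    unfolding eventually_finite_subsets_at_top using assms(1,2)
    by (intro exI[of _ T]) (auto intro!: prod_le_prod_subset assms(3,4))
qed simp

lemma perturbed_prod_less:
  fixes g :: "'a \<Rightarrow> real"
  assumes "a * (\<Prod>p\<in>S. g p) < c"
  obtains t where "t > 0" and "(a + t) * (\<Prod>p\<in>S. g p + t) < c"
proof -
  let ?h = "\<lambda>t. (a + t) * (\<Prod>p\<in>S. g p + t)"
  have "(?h \<longlongrightarrow> ?h 0) (at_right 0)"
    by (intro tendsto_intros)
  then have "\<forall>\<^sub>F t in at_right 0. ?h t < c"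
    using assms by (intro order_tendstoD) simp_all
  then have "\<forall>\<^sub>F t in at_right 0. 0 < t \<and> ?h t < c"
    using eventually_at_right_less by (rule eventually_conj[rotated])
  then show thesis
    using that eventually_happens'[of "at_right (0::real)"] by auto
qed

definition qp_nbhd :: "nat \<Rightarrow> (int \<Rightarrow> nat) \<Rightarrow> int \<Rightarrow> (int \<Rightarrow> nat) set" where
  "qp_nbhd p x n = {y \<in> Qp p. \<forall>k<n. y k = x k}"

lemma qp_open_qp_nbhd: "qp_open p (qp_nbhd p x n)"
  unfolding qp_open_def qp_nbhd_def by (intro conjI ballI exI[of _ n]) auto

lemma Zp_eq_qp_nbhd: "Zp p = qp_nbhd p (\<lambda>_. 0) 0"
  by (auto simp: Zp_def qp_nbhd_def)

lemma padic_factor_nonneg: "0 \<le> padic_factor p x"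
  by (simp add: padic_factor_def)

lemma padic_factor_le_powr:
  assumes "1 \<le> p" and "\<forall>k<n. y k = 0"
  shows "padic_factor p y \<le> real p powr (- real_of_int n)"
proof (cases "\<forall>k. y k = 0")
  case False
  then obtain m where "y m \<noteq> 0" by auto
  then have "y (LEAST k. y k \<noteq> 0) \<noteq> 0"
    using int_LeastI_bdd_below[of n "\<lambda>k. y k \<noteq> 0" m] assms(2) by auto
  then have "n \<le> (LEAST k. y k \<noteq> 0)"
    using assms(2) by (meson not_le)
  then have "real p powr (- real_of_int (LEAST k. y k \<noteq> 0)) \<le> real p powr (- real_of_int n)"
    using assms(1) by (intro powr_mono) auto
  then show ?thesis
    using False by (simp add: padic_factor_def)
qed (simp add: padic_factor_def)

lemma padic_factor_le_1: "1 \<le> p \<Longrightarrow> y \<in> Zp p \<Longrightarrow> padic_factor p y \<le> 1"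
  using padic_factor_le_powr[of p 0 y] by (simp add: Zp_def)

lemma padic_factor_locally_constant:
  assumes "x \<in> Qp p" and "x m \<noteq> 0"
  shows "\<exists>n. \<forall>y. (\<forall>k<n. y k = x k) \<longrightarrow> padic_factor p y = padic_factor p x"
proof -
  obtain N where N: "\<forall>n<N. x n = 0"
    using assms(1) by (auto simp: Qp_def)
  define v where "v = (LEAST n. x n \<noteq> 0)"
  have xv: "x v \<noteq> 0" and v_le: "\<And>k. x k \<noteq> 0 \<Longrightarrow> v \<le> k"
    using int_Least_bdd_below[of N "\<lambda>n. x n \<noteq> 0" m] N assms(2) unfolding v_def by auto
  show ?thesis
  proof (intro exI[of _ "v + 1"] allI impI)
    fix y :: "int \<Rightarrow> nat"
    assume y: "\<forall>k<v + 1. y k = x k"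
    have "(LEAST n. y n \<noteq> 0) = v"
    proof (rule Least_equality)
      show "y v \<noteq> 0" using y xv by simp
      show "v \<le> k" if "y k \<noteq> 0" for k
        using y v_le that by (cases "k < v + 1") auto
    qed
    then show "padic_factor p y = padic_factor p x"
      using y xv assms(2) by (auto simp: padic_factor_def v_def)
  qed
qed

lemma padic_factor_upper_semicontinuous:
  assumes "1 < p" and "x \<in> Qp p" and "t > 0"
  shows "\<exists>n. \<forall>y\<in>qp_nbhd p x n. padic_factor p y \<le> padic_factor p x + t"
proof (cases "\<forall>k. x k = 0")
  case True
  have "1 / real p < 1" using assms(1) by simp
  then obtain n :: nat where "(1 / real p) ^ n < t"
    using real_arch_pow_inv[OF assms(3)] by blast
  moreover have "real p powr (- real n) = (1 / real p) ^ n"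
    using assms(1) by (simp add: powr_minus_divide powr_realpow power_one_over)
  ultimately have small: "real p powr (- real n) < t"
    by simp
  show ?thesis
  proof (intro exI[of _ "int n"] ballI)
    fix y
    assume "y \<in> qp_nbhd p x (int n)"
    then have "padic_factor p y \<le> real p powr (- real n)"
      using True assms(1) padic_factor_le_powr[of p "int n" y] by (simp add: qp_nbhd_def)
    moreover have "padic_factor p x = 0"
      using True by (simp add: padic_factor_def)
    ultimately show "padic_factor p y \<le> padic_factor p x + t"
      using small by linarith
  qed
next
  case False
  then obtain m where "x m \<noteq> 0" by auto
  then obtain n where n: "\<forall>y. (\<forall>k<n. y k = x k) \<longrightarrow> padic_factor p y = padic_factor p x"
    using padic_factor_locally_constant[OF assms(2)] by blast
  show ?thesis
  proof (intro exI[of _ n] ballI)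
    fix y
    assume "y \<in> qp_nbhd p x n"
    then have "\<forall>k<n. y k = x k"
      by (simp add: qp_nbhd_def)
    then have "padic_factor p y = padic_factor p x"
      using n by blast
    then show "padic_factor p y \<le> padic_factor p x + t"
      using assms(3) by linarith
  qed
qed

lemma adele_open_basic_open:
  assumes "open V" and "\<And>p. prime p \<Longrightarrow> qp_open p (W p)" and "finite {p. prime p \<and> W p \<noteq> Zp p}"
  shows "adele_open (adele_basic_open W V)"
proof -
  have "adele_basic_open W V \<subseteq> adeles"
    by (auto simp: adele_basic_open_def adeles_def)
  then show ?thesis
    using assms unfolding adele_open_def by blast
qed

lemma adele_abs_le_partial_prod:
  assumes "finite S" and "S \<subseteq> {p. prime p}" and "\<And>p. prime p \<Longrightarrow> p \<notin> S \<Longrightarrow> b p \<in> Zp p"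
  shows "adele_abs (b, s) \<le> \<bar>s\<bar> * (\<Prod>p\<in>S. padic_factor p (b p))"
proof -
  have "Lim (finite_subsets_at_top {p. prime p}) (\<lambda>S. \<Prod>p\<in>S. padic_factor p (b p))
          \<le> (\<Prod>p\<in>S. padic_factor p (b p))"
    using assms by (intro Lim_prod_finite_subsets_le)
      (auto intro: padic_factor_nonneg padic_factor_le_1 prime_ge_1_nat)
  then show ?thesis
    unfolding adele_abs_def by (simp add: mult_left_mono)
qed

lemma adele_abs_less_imp_partial_prod_less:
  assumes "a \<in> finite_adeles" and "adele_abs (a, r) < c"
  obtains S where "finite S" "S \<subseteq> {p. prime p}" "\<And>p. prime p \<Longrightarrow> p \<notin> S \<Longrightarrow> a p \<in> Zp p"
    "\<bar>r\<bar> * (\<Prod>p\<in>S. padic_factor p (a p)) < c"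
proof -
  define F where "F = {p. prime p \<and> a p \<notin> Zp p}"
  let ?net = "finite_subsets_at_top {p. prime p}"
  have F: "finite F" "F \<subseteq> {p. prime p}"
    using assms(1) by (auto simp: F_def finite_adeles_def)
  then have "((\<lambda>S. \<Prod>p\<in>S. padic_factor p (a p))
               \<longlongrightarrow> Lim ?net (\<lambda>S. \<Prod>p\<in>S. padic_factor p (a p))) ?net"
    by (intro tendsto_Lim_prod_finite_subsets)
      (auto simp: F_def intro: padic_factor_nonneg padic_factor_le_1 prime_ge_1_nat)
  then have "((\<lambda>S. \<bar>r\<bar> * (\<Prod>p\<in>S. padic_factor p (a p))) \<longlongrightarrow> adele_abs (a, r)) ?net"
    unfolding adele_abs_def by (auto intro: tendsto_mult_left)
  then have "\<forall>\<^sub>F S in ?net. \<bar>r\<bar> * (\<Prod>p\<in>S. padic_factor p (a p)) < c"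
    using assms(2) by (rule order_tendstoD)
  moreover have "\<forall>\<^sub>F S in ?net. finite S \<and> F \<subseteq> S \<and> S \<subseteq> {p. prime p}"
    unfolding eventually_finite_subsets_at_top using F by blast
  ultimately obtain S where "\<bar>r\<bar> * (\<Prod>p\<in>S. padic_factor p (a p)) < c"
    "finite S" "F \<subseteq> S" "S \<subseteq> {p. prime p}"
    using eventually_happens'[OF finite_subsets_at_top_neq_bot eventually_conj] by blast
  then show thesis
    using that by (auto simp: F_def)
qed

lemma adele_open_nbhd_factors_le:
  assumes "a \<in> finite_adeles" and "finite S" and "S \<subseteq> {p. prime p}"
    and "\<And>p. prime p \<Longrightarrow> p \<notin> S \<Longrightarrow> a p \<in> Zp p" and "t > 0"
  obtains U where "adele_open U" and "(a, r) \<in> U"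
    and "\<And>b s. (b, s) \<in> U \<Longrightarrow> \<bar>s\<bar> \<le> \<bar>r\<bar> + t"
    and "\<And>b s p. (b, s) \<in> U \<Longrightarrow> prime p \<Longrightarrow> p \<notin> S \<Longrightarrow> b p \<in> Zp p"
    and "\<And>b s p. (b, s) \<in> U \<Longrightarrow> p \<in> S \<Longrightarrow> padic_factor p (b p) \<le> padic_factor p (a p) + t"
proof -
  have "\<forall>p\<in>S. \<exists>n. \<forall>y\<in>qp_nbhd p (a p) n. padic_factor p y \<le> padic_factor p (a p) + t"
    using assms(1,3,5)
    by (auto intro!: padic_factor_upper_semicontinuous prime_gt_1_nat simp: finite_adeles_def)
  then obtain n where n: "\<And>p y. p \<in> S \<Longrightarrow> y \<in> qp_nbhd p (a p) (n p) \<Longrightarrow>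
                            padic_factor p y \<le> padic_factor p (a p) + t"
    by metis
  define W where "W p = (if p \<in> S then qp_nbhd p (a p) (n p) else Zp p)" for p
  show thesis
  proof (rule that[of "adele_basic_open W (ball r t)"])
    have "finite {p. prime p \<and> W p \<noteq> Zp p}"
      using assms(2) by (rule finite_subset[rotated]) (auto simp: W_def)
    then show "adele_open (adele_basic_open W (ball r t))"
      by (intro adele_open_basic_open) (auto simp: W_def Zp_eq_qp_nbhd qp_open_qp_nbhd)
    show "(a, r) \<in> adele_basic_open W (ball r t)"
      using assms(1,4,5) by (auto simp: adele_basic_open_def W_def qp_nbhd_def finite_adeles_def)
    fix b s p
    assume b: "(b, s) \<in> adele_basic_open W (ball r t)"
    then show "\<bar>s\<bar> \<le> \<bar>r\<bar> + t"
      by (auto simp: adele_basic_open_def dist_real_def)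
    show "b p \<in> Zp p" if "prime p" "p \<notin> S"
      using b that by (auto simp: adele_basic_open_def W_def)
    show "padic_factor p (b p) \<le> padic_factor p (a p) + t" if "p \<in> S"
    proof -
      have "b p \<in> qp_nbhd p (a p) (n p)"
        using b that assms(3) by (auto simp: adele_basic_open_def W_def)
      then show ?thesis
        using n that by blast
    qed
  qed
qed

theorem lemma3p5:
  "\<forall>x\<in>adeles. \<forall>c::real. adele_abs x < c \<longrightarrow>
     (\<exists>U. adele_open U \<and> x \<in> U \<and> (\<forall>y\<in>U. adele_abs y < c))"
proof (intro ballI allI impI)
  fix x c
  assume "x \<in> adeles" and "adele_abs x < c"
  then obtain a r where x: "x = (a, r)" and a: "a \<in> finite_adeles" and abs_x: "adele_abs (a, r) < c"
    by (auto simp: adeles_def)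
  obtain S where S: "finite S" "S \<subseteq> {p. prime p}"
    "\<And>p. prime p \<Longrightarrow> p \<notin> S \<Longrightarrow> a p \<in> Zp p"
    and prod_S: "\<bar>r\<bar> * (\<Prod>p\<in>S. padic_factor p (a p)) < c"
    using adele_abs_less_imp_partial_prod_less[OF a abs_x] by blast
  from prod_S obtain t where "t > 0" and t: "(\<bar>r\<bar> + t) * (\<Prod>p\<in>S. padic_factor p (a p) + t) < c"
    by (rule perturbed_prod_less)
  obtain U where U: "adele_open U" "(a, r) \<in> U"
    and near_real: "\<And>b s. (b, s) \<in> U \<Longrightarrow> \<bar>s\<bar> \<le> \<bar>r\<bar> + t"
    and integral: "\<And>b s p. (b, s) \<in> U \<Longrightarrow> prime p \<Longrightarrow> p \<notin> S \<Longrightarrow> b p \<in> Zp p"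
    and near_factors: "\<And>b s p. (b, s) \<in> U \<Longrightarrow> p \<in> S \<Longrightarrow>
                          padic_factor p (b p) \<le> padic_factor p (a p) + t"
    using adele_open_nbhd_factors_le[OF a S \<open>t > 0\<close>, where r = r] by blast
  have "adele_abs (b, s) < c" if "(b, s) \<in> U" for b s
  proof -
    have "adele_abs (b, s) \<le> \<bar>s\<bar> * (\<Prod>p\<in>S. padic_factor p (b p))"
      using S(1,2) integral[OF that] by (rule adele_abs_le_partial_prod)
    also have "\<dots> \<le> (\<bar>r\<bar> + t) * (\<Prod>p\<in>S. padic_factor p (a p) + t)"
      using near_real[OF that] near_factors[OF that]
      by (intro mult_mono prod_mono) (auto simp: padic_factor_nonneg intro: prod_nonneg)
    finally show ?thesis
      using t by linarith
  qed
  then show "\<exists>U. adele_open U \<and> x \<in> U \<and> (\<forall>y\<in>U. adele_abs y < c)"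
    using U x by auto
qed

end
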